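(* Let $I=(\mathcal{M},[N],(u_i)_{i\in[N]})$ be a non-negative instance with $\mathcal{M}\neq\emptyset$ and let $(S_1,\ldots,S_N)$ be the allocation produced by the round-robin greedy protocol for $I$. Then for every agent $i\in[N]$, $$u_i(S_i)\le \frac{1}{N}u_i(\mathcal{M})+\Big(1-\frac1N\Big)u^i_{\max},$$ where $u^i_{\max}:=\max_{j\in\mathcal{M}}u_i(j)$.
   Context: A non-negative instance: finite item set $\mathcal{M}$, agents $[N]=\{1,\dots,N\}$, additive utilities $u_i$ with $u_i(j)\ge 0$. The round-robin greedy protocol: agents pick in the fixed order $1,2,\dots,N,1,2,\dots,N,\dots$; at her turn agent $i$ receives an item of lowest utility $u_i$ among the unallocated items (ties broken arbitrarily), until all items are allocated; $S_i$ is the set agent $i$ receives. *)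

theory Defs
  imports Complex_Main
begin

text \<open>In a run of the round-robin greedy protocol, the k-th pick
(k = 0,1,...) is made by agent (k mod N) + 1. A run is recorded as the list of
picked items in order. Arbitrary tie-breaking: any list satisfying the greedy
condition at every step is a valid run.\<close>

definition rr_agent :: "nat \<Rightarrow> nat \<Rightarrow> nat" where
  "rr_agent N k = k mod N + 1"

definition rr_greedy_run :: "nat \<Rightarrow> (nat \<Rightarrow> 'a \<Rightarrow> real) \<Rightarrow> 'a set \<Rightarrow> 'a list \<Rightarrow> bool" where
  "rr_greedy_run N u M picks \<longleftrightarrow>
     distinct picks \<and> set picks = M \<and>
     (\<forall>k < length picks. \<forall>j \<in> M - set (take k picks).
        u (rr_agent N k) (picks ! k) \<le> u (rr_agent N k) j)"

definition rr_bundle :: "nat \<Rightarrow> 'a list \<Rightarrow> nat \<Rightarrow> 'a set" where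
  "rr_bundle N picks i = {picks ! k | k. k < length picks \<and> rr_agent N k = i}"

end

theory Submission
  imports Defs
begin

text \<open>Every pick of agent i is, in i's own valuation, no larger than any later pick. Hence, cutting
the run into blocks of length N that start at i's picks, N times the value of i's pick is at most
i's value of its block. Only the last block may be shorter than N; its missing positions cost at
most (N - 1) times i's largest value. Summing over the blocks gives
N u_i(S_i) \<le> u_i(M) + (N - 1) u^i_max.\<close>

lemma add_le_if_mod_eq_less:
  fixes k s N :: nat
  assumes "k mod N = s mod N" and "s < k"
  shows "s + N \<le> k"
proof -
  have "N dvd k - s" using assms by (simp add: mod_eq_dvd_iff_nat)
  then have "N \<le> k - s" using assms(2) by (simp add: dvd_imp_le)
  then show ?thesis using assms(2) by linarith
qed

lemma residue_class_sum_from_le: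
  fixes f :: "nat \<Rightarrow> real" and N L r s :: nat
  assumes "N \<ge> 1"
    and nonneg: "\<And>m. m < L \<Longrightarrow> 0 \<le> f m"
    and bounded: "\<And>m. m < L \<Longrightarrow> f m \<le> Mx" and "0 \<le> Mx"
    and mono: "\<And>k m. k \<le> m \<Longrightarrow> m < L \<Longrightarrow> k mod N = r \<Longrightarrow> f k \<le> f m"
    and "s mod N = r"
  shows "real N * (\<Sum>k | s \<le> k \<and> k < L \<and> k mod N = r. f k)
          \<le> (\<Sum>m = s..<L. f m) + (real N - 1) * Mx"
  using assms(6)
proof (induction "L - s" arbitrary: s rule: less_induct)
  case less
  show ?case
  proof (cases "s < L")
    case False
    then have "{k. s \<le> k \<and> k < L \<and> k mod N = r} = {}" by auto
    moreover have "0 \<le> (real N - 1) * Mx" using \<open>N \<ge> 1\<close> \<open>0 \<le> Mx\<close> by simp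
    ultimately show ?thesis using False by (simp del: Collect_empty_eq)
  next
    case True
    have head: "{k. s \<le> k \<and> k < L \<and> k mod N = r}
        = insert s {k. s + N \<le> k \<and> k < L \<and> k mod N = r}"
      using True less.prems add_le_if_mod_eq_less[of _ N s] by (auto simp: le_less)
    have "s \<notin> {k. s + N \<le> k \<and> k < L \<and> k mod N = r}" using \<open>N \<ge> 1\<close> by auto
    then have split_head: "(\<Sum>k | s \<le> k \<and> k < L \<and> k mod N = r. f k)
        = f s + (\<Sum>k | s + N \<le> k \<and> k < L \<and> k mod N = r. f k)"
      unfolding head by simp
    show ?thesis
    proof (cases "L \<le> s + N")
      case True
      then have "(\<Sum>k | s + N \<le> k \<and> k < L \<and> k mod N = r. f k) = 0"
        by (intro sum.neutral) auto
      moreover have "f s \<le> (\<Sum>m = s..<L. f m)"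
        using \<open>s < L\<close> nonneg by (intro member_le_sum) auto
      moreover have "(real N - 1) * f s \<le> (real N - 1) * Mx"
        using bounded[OF \<open>s < L\<close>] \<open>N \<ge> 1\<close> by (intro mult_left_mono) auto
      ultimately show ?thesis unfolding split_head by (simp add: algebra_simps)
    next
      case False
      have block: "real N * f s \<le> (\<Sum>m = s..<s + N. f m)"
        using sum_bounded_below[of "{s..<s + N}" "f s" f] mono[of s] less.prems False by auto
      have rest: "real N * (\<Sum>k | s + N \<le> k \<and> k < L \<and> k mod N = r. f k)
          \<le> (\<Sum>m = s + N..<L. f m) + (real N - 1) * Mx"
        using less.hyps[of "s + N"] less.prems \<open>N \<ge> 1\<close> \<open>s < L\<close> by auto
      have "(\<Sum>m = s..<L. f m) = (\<Sum>m = s..<s + N. f m) + (\<Sum>m = s + N..<L. f m)"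
        using False by (simp add: sum.atLeastLessThan_concat)
      then show ?thesis unfolding split_head using block rest by (simp add: distrib_left)
    qed
  qed
qed

lemma residue_class_sum_le:
  fixes f :: "nat \<Rightarrow> real" and N L r :: nat
  assumes "r < N"
    and nonneg: "\<And>m. m < L \<Longrightarrow> 0 \<le> f m"
    and "\<And>m. m < L \<Longrightarrow> f m \<le> Mx" and "0 \<le> Mx"
    and "\<And>k m. k \<le> m \<Longrightarrow> m < L \<Longrightarrow> k mod N = r \<Longrightarrow> f k \<le> f m"
  shows "real N * (\<Sum>k | k < L \<and> k mod N = r. f k) \<le> (\<Sum>m<L. f m) + (real N - 1) * Mx"
proof -
  have "{k. k < L \<and> k mod N = r} = {k. r \<le> k \<and> k < L \<and> k mod N = r}"
    using mod_less_eq_dividend by (auto intro: order_trans)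
  moreover have "(\<Sum>m = r..<L. f m) \<le> (\<Sum>m<L. f m)"
    using nonneg by (intro sum_mono2) auto
  ultimately show ?thesis
    using residue_class_sum_from_le[of N L f Mx r r] assms by fastforce
qed

lemma rr_greedy_run_pick_le_later:
  assumes "rr_greedy_run N u M picks" and "k \<le> m" and "m < length picks"
  shows "u (rr_agent N k) (picks ! k) \<le> u (rr_agent N k) (picks ! m)"
proof -
  have "distinct picks" and "set picks = M" using assms(1) unfolding rr_greedy_run_def by auto
  have "picks ! m \<in> set (drop k picks)"
    using nth_mem[of "m - k" "drop k picks"] assms(2,3) by simp
  then have "picks ! m \<in> M - set (take k picks)"
    using \<open>distinct picks\<close> \<open>set picks = M\<close> set_take_disj_set_drop_if_distinct[of picks k k]
      assms(3) by auto
  then show ?thesis using assms unfolding rr_greedy_run_def by auto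
qed

lemma sum_rr_bundle:
  assumes "distinct picks"
  shows "(\<Sum>j\<in>rr_bundle N picks i. g j)
         = (\<Sum>k | k < length picks \<and> rr_agent N k = i. g (picks ! k))"
proof -
  have "rr_bundle N picks i = (!) picks ` {k. k < length picks \<and> rr_agent N k = i}"
    unfolding rr_bundle_def by auto
  moreover have "inj_on ((!) picks) {k. k < length picks \<and> rr_agent N k = i}"
    using assms by (auto simp: inj_on_def nth_eq_iff_index_eq)
  ultimately show ?thesis by (simp add: sum.reindex)
qed

theorem lemma3:
  fixes N :: nat and M :: "'a set" and u :: "nat \<Rightarrow> 'a \<Rightarrow> real" and picks :: "'a list"
  assumes "N \<ge> 1"
    and "finite M" and "M \<noteq> {}"
    and "\<And>i j. i \<in> {1..N} \<Longrightarrow> j \<in> M \<Longrightarrow> u i j \<ge> 0"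
    and "rr_greedy_run N u M picks"
    and "i \<in> {1..N}"
  shows "(\<Sum>j\<in>rr_bundle N picks i. u i j)
         \<le> (1 / real N) * (\<Sum>j\<in>M. u i j) + (1 - 1 / real N) * Max (u i ` M)"
proof -
  define Mx where "Mx = Max (u i ` M)"
  have "distinct picks" and M: "M = set picks" using assms(5) unfolding rr_greedy_run_def by auto
  have agent_i: "rr_agent N k = i \<longleftrightarrow> k mod N = i - 1" for k
    using assms(6) unfolding rr_agent_def by auto
  have "real N * (\<Sum>k | k < length picks \<and> k mod N = i - 1. u i (picks ! k))
      \<le> (\<Sum>m<length picks. u i (picks ! m)) + (real N - 1) * Mx"
  proof (rule residue_class_sum_le)
    show "u i (picks ! k) \<le> u i (picks ! m)"
      if "k \<le> m" "m < length picks" "k mod N = i - 1" for k m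
      using rr_greedy_run_pick_le_later[OF assms(5) that(1,2)] agent_i[of k] that(3) by simp
    obtain j where "j \<in> M" using assms(3) by blast
    then show "0 \<le> Mx"
      using assms(2,4,6) unfolding Mx_def by (meson Max_ge finite_imageI imageI order_trans)
  qed (use assms(2,4,6) M in \<open>auto simp: Mx_def\<close>)
  then have "real N * (\<Sum>j\<in>rr_bundle N picks i. u i j) \<le> (\<Sum>j\<in>M. u i j) + (real N - 1) * Mx"
    using \<open>distinct picks\<close> by (simp add: sum_rr_bundle agent_i M sum.distinct_set_conv_list
        sum_list_sum_nth atLeast0LessThan)
  then show ?thesis
    using assms(1) unfolding Mx_def by (simp add: field_simps)
qed

end
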